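(* Let $1\le p<\infty$ and let $\mathbf u,\mathbf v$ be bounded sequences of non-zero scalars such that the weighted backward shifts $B_{\mathbf u}$ and $B_{\mathbf v}$ are frequently hypercyclic on $\ell_p(\mathbb Z_+)$. If $\frac{u_1\cdots u_n}{v_1\cdots v_n}$ has a non-zero limit as $n\to\infty$, then $B_{\mathbf u}$ and $B_{\mathbf v}$ have the same frequently hypercyclic vectors.
   Context: $B_{\mathbf w}e_0=0$, $B_{\mathbf w}e_n=w_ne_{n-1}$ on $\ell_p(\mathbb Z_+)$ (real or complex). A vector $x$ is frequently hypercyclic for an operator $T$ if for every non-empty open set $U$, the set $\{n\in\mathbb Z_+: T^nx\in U\}$ has positive lower density; $T$ is frequently hypercyclic if it has such a vector. *)

theory Defs
  imports "HOL-Analysis.Analysis" "HOL-Library.Liminf_Limsup"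
begin

definition lp :: "real \<Rightarrow> (nat \<Rightarrow> 'a::real_normed_vector) set" where
  "lp p = {x. summable (\<lambda>n. norm (x n) powr p)}"

definition lp_norm :: "real \<Rightarrow> (nat \<Rightarrow> 'a::real_normed_vector) \<Rightarrow> real" where
  "lp_norm p x = (\<Sum>n. norm (x n) powr p) powr (1 / p)"

definition lp_open :: "real \<Rightarrow> (nat \<Rightarrow> 'a::real_normed_vector) set \<Rightarrow> bool" where
  "lp_open p U \<longleftrightarrow> U \<subseteq> lp p \<and>
     (\<forall>x\<in>U. \<exists>e>0. \<forall>y\<in>lp p. lp_norm p (y - x) < e \<longrightarrow> y \<in> U)"

text \<open>Weighted backward shift: (B_w x)_n = w_(n+1) x_(n+1), i.e. B_w e_0 = 0, B_w e_n = w_n e_(n-1).\<close>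
definition wshift :: "(nat \<Rightarrow> 'a::real_normed_field) \<Rightarrow> (nat \<Rightarrow> 'a) \<Rightarrow> (nat \<Rightarrow> 'a)" where
  "wshift w x = (\<lambda>n. w (Suc n) * x (Suc n))"

definition lower_density :: "nat set \<Rightarrow> ereal" where
  "lower_density A = liminf (\<lambda>N. ereal (real (card {n\<in>A. n < N}) / real N))"

definition fhc_vector :: "real \<Rightarrow> ((nat \<Rightarrow> 'a::real_normed_vector) \<Rightarrow> (nat \<Rightarrow> 'a)) \<Rightarrow> (nat \<Rightarrow> 'a) \<Rightarrow> bool" where
  "fhc_vector p T x \<longleftrightarrow> x \<in> lp p \<and>
     (\<forall>U. lp_open p U \<and> U \<noteq> {} \<longrightarrow> lower_density {n. (T ^^ n) x \<in> U} > 0)"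

definition fhc :: "real \<Rightarrow> ((nat \<Rightarrow> 'a::real_normed_vector) \<Rightarrow> (nat \<Rightarrow> 'a)) \<Rightarrow> bool" where
  "fhc p T \<longleftrightarrow> (\<exists>x. fhc_vector p T x)"

end

theory Submission
  imports Defs
begin

(* Put a k = (u 1 * ... * u k) / (v 1 * ... * v k). Then (B_v^n x) k = a k / a (k + n) * (B_u^n x) k,
   and since a k tends to L, the diagonal operators diag (a k / a (k + n)) converge, uniformly on
   bounded sets, to the isomorphism diag (a k / L) of l_p. Hence for every non-empty open U there is a
   non-empty open V that all these operators with n large enough map into U, so up to finitely many n
   the visits of the B_u-orbit of x to V are visits of the B_v-orbit to U, and lower densities are
   insensitive to finitely many terms. Distances are measured by the p-th power sum, which satisfies
   the triangle inequality up to the factor 2 powr p; this suffices and avoids Minkowski's inequality. *)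

definition lp_sum :: "real \<Rightarrow> (nat \<Rightarrow> 'a::real_normed_vector) \<Rightarrow> real" where
  "lp_sum p x = (\<Sum>n. norm (x n) powr p)"

lemma lp_sum_nonneg: "x \<in> lp p \<Longrightarrow> lp_sum p x \<ge> 0"
  unfolding lp_sum_def lp_def by (auto intro: suminf_nonneg)

lemma powr_add_le_two_powr:
  fixes s t p :: real
  assumes "s \<ge> 0" "t \<ge> 0" "p > 0"
  shows "(s + t) powr p \<le> 2 powr p * (s powr p + t powr p)"
proof -
  have "(s + t) powr p \<le> (2 * max s t) powr p"
    by (intro powr_mono2) (use assms in auto)
  also have "\<dots> = 2 powr p * max s t powr p"
    using assms by (simp add: powr_mult)
  also have "max s t powr p \<le> s powr p + t powr p"
    by (simp add: max_def)
  finally show ?thesis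
    by simp
qed

lemma lp_dominated:
  assumes p: "p > 0" and z: "z \<in> lp p" and C: "C \<ge> 0"
    and h: "\<And>k. norm (h k) \<le> C * norm (z k)"
  shows "h \<in> lp p" and "lp_sum p h \<le> C powr p * lp_sum p z"
proof -
  have bound: "norm (h k) powr p \<le> C powr p * norm (z k) powr p" for k
    using powr_mono2[OF less_imp_le[OF p] norm_ge_zero h] C by (simp add: powr_mult)
  have sz: "summable (\<lambda>k. norm (z k) powr p)"
    using z unfolding lp_def by simp
  then have sCz: "summable (\<lambda>k. C powr p * norm (z k) powr p)"
    by (rule summable_mult)
  have sh: "summable (\<lambda>k. norm (h k) powr p)"
    by (rule summable_comparison_test'[OF sCz]) (use bound in auto)
  then show "h \<in> lp p"
    unfolding lp_def by simp
  have "lp_sum p h \<le> (\<Sum>k. C powr p * norm (z k) powr p)"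
    unfolding lp_sum_def by (rule suminf_le[OF bound sh sCz])
  also have "\<dots> = C powr p * lp_sum p z"
    unfolding lp_sum_def by (rule suminf_mult[OF sz])
  finally show "lp_sum p h \<le> C powr p * lp_sum p z" .
qed

lemma lp_quasi_triangle:
  assumes p: "p > 0" and f: "f \<in> lp p" and g: "g \<in> lp p"
    and h: "\<And>k. norm (h k) \<le> norm (f k) + norm (g k)"
  shows "h \<in> lp p" and "lp_sum p h \<le> 2 powr p * (lp_sum p f + lp_sum p g)"
proof -
  have bound: "norm (h k) powr p \<le> 2 powr p * (norm (f k) powr p + norm (g k) powr p)" for k
    using powr_mono2[OF less_imp_le[OF p] norm_ge_zero h] powr_add_le_two_powr[OF _ _ p]
    by (meson norm_ge_zero order_trans)
  have sf: "summable (\<lambda>k. norm (f k) powr p)" and sg: "summable (\<lambda>k. norm (g k) powr p)"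
    using f g unfolding lp_def by simp_all
  have sfg: "summable (\<lambda>k. 2 powr p * (norm (f k) powr p + norm (g k) powr p))"
    by (intro summable_mult summable_add sf sg)
  have sh: "summable (\<lambda>k. norm (h k) powr p)"
    by (rule summable_comparison_test'[OF sfg]) (use bound in auto)
  then show "h \<in> lp p"
    unfolding lp_def by simp
  have "lp_sum p h \<le> (\<Sum>k. 2 powr p * (norm (f k) powr p + norm (g k) powr p))"
    unfolding lp_sum_def by (rule suminf_le[OF bound sh sfg])
  also have "\<dots> = 2 powr p * (lp_sum p f + lp_sum p g)"
    unfolding lp_sum_def using suminf_mult[OF summable_add[OF sf sg]] suminf_add[OF sf sg] by simp
  finally show "lp_sum p h \<le> 2 powr p * (lp_sum p f + lp_sum p g)" .
qed

lemma lp_diff: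
  assumes "p > 0" "f \<in> lp p" "g \<in> lp p"
  shows "f - g \<in> lp p"
  using lp_quasi_triangle(1)[OF assms, of "f - g"] by (simp add: norm_triangle_ineq4)

lemma lp_norm_less_iff:
  assumes p: "p > 0" and x: "x \<in> lp p" and e: "e > 0"
  shows "lp_norm p x < e \<longleftrightarrow> lp_sum p x < e powr p"
proof -
  have S: "lp_sum p x \<ge> 0"
    using x by (rule lp_sum_nonneg)
  have "lp_sum p x powr (1 / p) < e \<longleftrightarrow> (lp_sum p x powr (1 / p)) powr p < e powr p"
    using S e p by (smt (verit) powr_ge_zero powr_less_mono2 powr_mono2)
  also have "(lp_sum p x powr (1 / p)) powr p = lp_sum p x"
    using S p by (simp add: powr_powr)
  finally show ?thesis
    by (simp add: lp_norm_def lp_sum_def)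
qed

lemma lp_open_iff_lp_sum:
  assumes p: "p > 0"
  shows "lp_open p U \<longleftrightarrow>
    U \<subseteq> lp p \<and> (\<forall>z\<in>U. \<exists>\<delta>>0. \<forall>w\<in>lp p. lp_sum p (w - z) < \<delta> \<longrightarrow> w \<in> U)"
proof -
  have "(\<exists>e>0. \<forall>w\<in>lp p. lp_norm p (w - z) < e \<longrightarrow> w \<in> U) \<longleftrightarrow>
        (\<exists>\<delta>>0. \<forall>w\<in>lp p. lp_sum p (w - z) < \<delta> \<longrightarrow> w \<in> U)" if z: "z \<in> lp p" for z
  proof
    assume "\<exists>e>0. \<forall>w\<in>lp p. lp_norm p (w - z) < e \<longrightarrow> w \<in> U"
    then obtain e where "e > 0" "\<forall>w\<in>lp p. lp_norm p (w - z) < e \<longrightarrow> w \<in> U"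
      by blast
    then show "\<exists>\<delta>>0. \<forall>w\<in>lp p. lp_sum p (w - z) < \<delta> \<longrightarrow> w \<in> U"
      using lp_norm_less_iff[OF p lp_diff[OF p _ z]] by (intro exI[of _ "e powr p"]) auto
  next
    assume "\<exists>\<delta>>0. \<forall>w\<in>lp p. lp_sum p (w - z) < \<delta> \<longrightarrow> w \<in> U"
    then obtain \<delta> where \<delta>: "\<delta> > 0" "\<forall>w\<in>lp p. lp_sum p (w - z) < \<delta> \<longrightarrow> w \<in> U"
      by blast
    have "(\<delta> powr (1 / p)) powr p = \<delta>"
      using \<delta> p by (simp add: powr_powr)
    then show "\<exists>e>0. \<forall>w\<in>lp p. lp_norm p (w - z) < e \<longrightarrow> w \<in> U"
      using \<delta> lp_norm_less_iff[OF p lp_diff[OF p _ z], of _ "\<delta> powr (1 / p)"]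
      by (intro exI[of _ "\<delta> powr (1 / p)"]) auto
  qed
  then show ?thesis
    unfolding lp_open_def by blast
qed

(* lp_sum-balls are not known to be open, as lp_sum is only a quasi-norm; their interior is. *)
definition lp_interior :: "real \<Rightarrow> (nat \<Rightarrow> 'a::real_normed_vector) set \<Rightarrow> (nat \<Rightarrow> 'a) set" where
  "lp_interior p W = {z \<in> lp p. \<exists>\<delta>>0. \<forall>w\<in>lp p. lp_sum p (w - z) < \<delta> \<longrightarrow> w \<in> W}"

lemma lp_interior_subset: "lp_interior p W \<subseteq> W"
proof
  fix z assume "z \<in> lp_interior p W"
  moreover have "lp_sum p (z - z) = 0"
    by (simp add: lp_sum_def)
  ultimately show "z \<in> W"
    unfolding lp_interior_def by force
qed

lemma lp_open_lp_interior:
  assumes p: "p > 0"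
  shows "lp_open p (lp_interior p W)"
  unfolding lp_open_iff_lp_sum[OF p]
proof (intro conjI ballI)
  show "lp_interior p W \<subseteq> lp p"
    unfolding lp_interior_def by blast
  fix z assume "z \<in> lp_interior p W"
  then obtain \<delta> where z: "z \<in> lp p" and \<delta>: "\<delta> > 0" "\<forall>w\<in>lp p. lp_sum p (w - z) < \<delta> \<longrightarrow> w \<in> W"
    unfolding lp_interior_def by blast
  define \<epsilon> where "\<epsilon> = \<delta> / (2 * 2 powr p)"
  have \<epsilon>: "\<epsilon> > 0"
    using \<delta> by (simp add: \<epsilon>_def)
  have "w \<in> lp_interior p W" if w: "w \<in> lp p" "lp_sum p (w - z) < \<epsilon>" for w
  proof -
    have "w' \<in> W" if w': "w' \<in> lp p" "lp_sum p (w' - w) < \<epsilon>" for w'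
    proof -
      have "lp_sum p (w' - z) \<le> 2 powr p * (lp_sum p (w' - w) + lp_sum p (w - z))"
        using norm_triangle_ineq[of "w' k - w k" "w k - z k" for k]
        by (intro lp_quasi_triangle(2)[OF p lp_diff[OF p w'(1) w(1)] lp_diff[OF p w(1) z]]) simp
      also have "\<dots> < 2 powr p * (\<epsilon> + \<epsilon>)"
        using w w' by (intro mult_strict_left_mono) auto
      also have "\<dots> = \<delta>"
        by (simp add: \<epsilon>_def field_simps)
      finally show ?thesis
        using \<delta> w' by auto
    qed
    then show ?thesis
      using w \<epsilon> unfolding lp_interior_def by blast
  qed
  then show "\<exists>\<epsilon>>0. \<forall>w\<in>lp p. lp_sum p (w - z) < \<epsilon> \<longrightarrow> w \<in> lp_interior p W"
    using \<epsilon> by blast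
qed

lemma lower_density_mono_cofinite:
  assumes "A \<subseteq> B \<union> {..<N}"
  shows "lower_density A \<le> lower_density B"
proof -
  have card_le: "card {n\<in>A. n < M} \<le> card {n\<in>B. n < M} + N" for M
  proof -
    have "card {n\<in>A. n < M} \<le> card ({n\<in>B. n < M} \<union> {..<N})"
      using assms by (intro card_mono) auto
    also have "\<dots> \<le> card {n\<in>B. n < M} + N"
      using card_Un_le[of "{n\<in>B. n < M}" "{..<N}"] by simp
    finally show ?thesis .
  qed
  have "ereal (real (card {n\<in>A. n < M}) / real M) \<le>
        ereal (real N / real M) + ereal (real (card {n\<in>B. n < M}) / real M)" for M
    using card_le[of M] by (simp add: add_divide_distrib[symmetric] divide_right_mono)
  then have "lower_density A \<le>
      liminf (\<lambda>M. ereal (real N / real M) + ereal (real (card {n\<in>B. n < M}) / real M))"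
    unfolding lower_density_def by (intro Liminf_mono) simp
  also have "\<dots> = lower_density B"
  proof -
    have "(\<lambda>M. real N / real M) \<longlonglongrightarrow> 0"
      by (rule lim_const_over_n)
    then have "(\<lambda>M. ereal (real N / real M)) \<longlonglongrightarrow> 0"
      by (simp add: zero_ereal_def)
    then show ?thesis
      unfolding lower_density_def by (subst ereal_liminf_lim_add) auto
  qed
  finally show ?thesis .
qed

lemma lp_sum_multiplier_perturbation:
  fixes m c :: "nat \<Rightarrow> 'a::real_normed_field"
  assumes p: "p > 0" and w: "w \<in> lp p" and y: "y \<in> lp p"
    and C: "\<And>k. norm (c k) \<le> C" and \<gamma>: "\<And>k. norm (m k - c k) \<le> \<gamma>"
  shows "(\<lambda>k. m k * w k) \<in> lp p"
    and "lp_sum p (\<lambda>k. m k * w k - y k) \<le>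
           2 powr p * (lp_sum p (\<lambda>k. c k * w k - y k) + \<gamma> powr p * lp_sum p w)"
proof -
  have "0 \<le> norm (m 0 - c 0)" "0 \<le> norm (c 0)"
    by simp_all
  then have nonneg: "\<gamma> \<ge> 0" "C \<ge> 0"
    using C \<gamma> by (meson order_trans)+
  have "(\<lambda>k. c k * w k) \<in> lp p"
    using C by (intro lp_dominated(1)[OF p w nonneg(2)]) (simp add: norm_mult mult_right_mono)
  then have main: "(\<lambda>k. c k * w k - y k) \<in> lp p"
    using lp_diff[OF p _ y] by (simp add: fun_diff_def)
  have err_bound: "norm ((m k - c k) * w k) \<le> \<gamma> * norm (w k)" for k
    using \<gamma> by (simp add: norm_mult mult_right_mono)
  note err = lp_dominated[OF p w nonneg(1) err_bound]
  have split: "norm (m k * w k - y k) \<le> norm (c k * w k - y k) + norm ((m k - c k) * w k)" for k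
    by (rule order_trans[OF _ norm_triangle_ineq]) (simp add: algebra_simps)
  note perturbed = lp_quasi_triangle[OF p main err(1) split]
  show "lp_sum p (\<lambda>k. m k * w k - y k) \<le>
          2 powr p * (lp_sum p (\<lambda>k. c k * w k - y k) + \<gamma> powr p * lp_sum p w)"
    using perturbed(2) err(2) by (smt (verit) powr_ge_zero mult_left_mono)
  have "norm (m k * w k) \<le> norm (m k * w k - y k) + norm (y k)" for k
    using norm_triangle_sub[of "m k * w k" "y k"] by (simp add: add.commute)
  then show "(\<lambda>k. m k * w k) \<in> lp p"
    by (rule lp_quasi_triangle(1)[OF p perturbed(1) y])
qed

lemma lp_interior_multiplier_neighbourhood:
  fixes c :: "nat \<Rightarrow> 'a::real_normed_field"
  assumes p: "p > 0" and z: "z \<in> lp p" and C: "\<And>k. norm (c k) \<le> C" and \<tau>: "\<tau> > 0"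
  shows "z \<in> lp_interior p
    {w \<in> lp p. lp_sum p (\<lambda>k. c k * (w k - z k)) < \<tau> \<and> lp_sum p w < 2 powr p * (1 + lp_sum p z)}"
proof -
  have C_nonneg: "C \<ge> 0"
    using C[of 0] norm_ge_zero order_trans by blast
  define \<delta> where "\<delta> = min 1 (\<tau> / (C powr p + 1))"
  have \<delta>: "\<delta> > 0"
    using \<tau> by (simp add: \<delta>_def add_nonneg_pos)
  have "lp_sum p (\<lambda>k. c k * (w k - z k)) < \<tau> \<and> lp_sum p w < 2 powr p * (1 + lp_sum p z)"
    if w: "w \<in> lp p" "lp_sum p (w - z) < \<delta>" for w
  proof
    have "lp_sum p (\<lambda>k. c k * (w k - z k)) \<le> C powr p * lp_sum p (w - z)"
      using C by (intro lp_dominated(2)[OF p lp_diff[OF p w(1) z] C_nonneg])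
        (simp add: norm_mult mult_right_mono)
    also have "\<dots> \<le> C powr p * (\<tau> / (C powr p + 1))"
      using w(2) by (intro mult_left_mono) (auto simp: \<delta>_def)
    also have "\<dots> < \<tau>"
      using \<tau> by (simp add: divide_less_eq add_nonneg_pos)
    finally show "lp_sum p (\<lambda>k. c k * (w k - z k)) < \<tau>" .
    have "lp_sum p w \<le> 2 powr p * (lp_sum p (w - z) + lp_sum p z)"
      by (rule lp_quasi_triangle(2)[OF p lp_diff[OF p w(1) z] z])
        (simp add: norm_triangle_sub add.commute)
    also have "\<dots> < 2 powr p * (1 + lp_sum p z)"
      using w(2) by (intro mult_strict_left_mono) (auto simp: \<delta>_def)
    finally show "lp_sum p w < 2 powr p * (1 + lp_sum p z)" .
  qed
  then show ?thesis
    using z \<delta> unfolding lp_interior_def by blast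
qed

lemma diagonal_ratio_eventually_maps_open_into:
  fixes a :: "nat \<Rightarrow> 'a::real_normed_field" and U :: "(nat \<Rightarrow> 'a) set"
  assumes p: "p > 0" and a_nz: "\<And>k. a k \<noteq> 0" and lim: "a \<longlonglongrightarrow> L" and L: "L \<noteq> 0"
    and U: "lp_open p U" and y_U: "y \<in> U"
  obtains V N where "lp_open p V" "V \<noteq> {}"
    "\<And>n w. N \<le> n \<Longrightarrow> w \<in> V \<Longrightarrow> (\<lambda>k. a k / a (k + n) * w k) \<in> U"
proof -
  obtain \<rho> where \<rho>: "\<rho> > 0" "\<And>w. w \<in> lp p \<Longrightarrow> lp_sum p (w - y) < \<rho> \<Longrightarrow> w \<in> U"
    using U y_U unfolding lp_open_iff_lp_sum[OF p] by blast
  have y: "y \<in> lp p"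
    using U y_U unfolding lp_open_def by blast
  obtain A where A: "A > 0" "\<And>k. norm (a k) \<le> A"
    using lim by (metis BseqE convergentI convergent_imp_Bseq)
  have lim_inverse: "(\<lambda>k. inverse (a k)) \<longlonglongrightarrow> inverse L"
    using lim L by (rule tendsto_inverse)
  then obtain B where B: "B > 0" "\<And>k. norm (inverse (a k)) \<le> B"
    by (metis BseqE convergentI convergent_imp_Bseq)
  define c where "c k = a k / L" for k
  \<comment> \<open>z is the preimage of y under the limit operator diag (a k / L).\<close>
  define z where "z k = L / a k * y k" for k
  have c_bound: "norm (c k) \<le> A / norm L" for k
    using A L by (simp add: c_def norm_divide divide_right_mono)
  have c_z: "c k * z k = y k" for k
    using a_nz L by (simp add: c_def z_def)
  have z: "z \<in> lp p"
  proof (rule lp_dominated(1)[OF p y])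
    show "norm L * B \<ge> 0"
      using B by simp
    show "norm (z k) \<le> norm L * B * norm (y k)" for k
      using B(2)[of k] by (auto simp: z_def norm_mult norm_divide divide_inverse
          intro!: mult_right_mono mult_left_mono)
  qed
  define \<tau> where "\<tau> = \<rho> / (2 * 2 powr p)"
  define R where "R = 2 powr p * (1 + lp_sum p z)"
  define \<gamma> where "\<gamma> = (\<tau> / R) powr (1 / p)"
  have \<tau>: "\<tau> > 0" and R: "R > 0"
    using \<rho> lp_sum_nonneg[OF z] by (simp_all add: \<tau>_def R_def add_pos_nonneg)
  have \<gamma>: "\<gamma> > 0" and \<gamma>_R: "\<gamma> powr p * R = \<tau>"
    using \<tau> R p by (simp_all add: \<gamma>_def powr_powr)
  define V where
    "V = lp_interior p {w \<in> lp p. lp_sum p (\<lambda>k. c k * (w k - z k)) < \<tau> \<and> lp_sum p w < R}"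
  have "z \<in> V"
    unfolding V_def R_def using lp_interior_multiplier_neighbourhood[OF p z c_bound \<tau>] .
  moreover have "lp_open p V"
    unfolding V_def using p by (rule lp_open_lp_interior)
  moreover obtain N where N: "\<And>j. N \<le> j \<Longrightarrow> norm (inverse (a j) - inverse L) < \<gamma> / A"
    using lim_inverse \<gamma> A unfolding LIMSEQ_def dist_norm by (metis divide_pos_pos)
  have "(\<lambda>k. a k / a (k + n) * w k) \<in> U" if n: "N \<le> n" and "w \<in> V" for n w
  proof -
    have w: "w \<in> lp p" and w_near: "lp_sum p (\<lambda>k. c k * (w k - z k)) < \<tau>" and w_bound: "lp_sum p w < R"
      using \<open>w \<in> V\<close> lp_interior_subset unfolding V_def by blast+
    have "norm (a k / a (k + n) - c k) \<le> \<gamma>" for k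
    proof -
      have "norm (a k / a (k + n) - c k) = norm (a k) * norm (inverse (a (k + n)) - inverse L)"
        by (simp add: c_def divide_inverse norm_mult[symmetric] right_diff_distrib)
      also have "\<dots> \<le> A * (\<gamma> / A)"
        using A N[of "k + n"] n by (intro mult_mono) auto
      finally show ?thesis
        using A by simp
    qed
    note perturbed = lp_sum_multiplier_perturbation[OF p w y c_bound this]
    have "lp_sum p ((\<lambda>k. a k / a (k + n) * w k) - y) \<le>
          2 powr p * (lp_sum p (\<lambda>k. c k * (w k - z k)) + \<gamma> powr p * lp_sum p w)"
      using perturbed(2) c_z by (simp add: fun_diff_def right_diff_distrib)
    also have "\<dots> < 2 powr p * (\<tau> + \<gamma> powr p * R)"
      using w_near w_bound \<gamma> by (intro mult_strict_left_mono add_strict_mono) auto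
    also have "\<dots> = \<rho>"
      unfolding \<gamma>_R \<tau>_def by (simp add: field_simps)
    finally show ?thesis
      by (rule \<rho>(2)[OF perturbed(1)])
  qed
  ultimately show ?thesis
    using that by blast
qed

lemma fhc_vector_diagonal_ratio_transfer:
  fixes T S :: "(nat \<Rightarrow> 'a::real_normed_field) \<Rightarrow> nat \<Rightarrow> 'a"
  assumes p: "p > 0" and a_nz: "\<And>k. a k \<noteq> 0" and lim: "a \<longlonglongrightarrow> L" and L: "L \<noteq> 0"
    and orbits: "\<And>n k. (S ^^ n) x k = a k / a (k + n) * (T ^^ n) x k"
    and x: "fhc_vector p T x"
  shows "fhc_vector p S x"
  unfolding fhc_vector_def
proof (intro conjI allI impI)
  show "x \<in> lp p"
    using x unfolding fhc_vector_def by blast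
  fix U :: "(nat \<Rightarrow> 'a) set"
  assume U: "lp_open p U \<and> U \<noteq> {}"
  then obtain y where "y \<in> U"
    by blast
  then obtain V N where V: "lp_open p V" "V \<noteq> {}"
    and into_U: "\<And>n w. N \<le> n \<Longrightarrow> w \<in> V \<Longrightarrow> (\<lambda>k. a k / a (k + n) * w k) \<in> U"
    using diagonal_ratio_eventually_maps_open_into[OF p a_nz lim L] U by blast
  have "{n. (T ^^ n) x \<in> V} \<subseteq> {n. (S ^^ n) x \<in> U} \<union> {..<N}"
    using into_U by (auto simp: orbits[abs_def] not_less)
  then have "lower_density {n. (T ^^ n) x \<in> V} \<le> lower_density {n. (S ^^ n) x \<in> U}"
    by (rule lower_density_mono_cofinite)
  moreover have "lower_density {n. (T ^^ n) x \<in> V} > 0"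
    using x V unfolding fhc_vector_def by blast
  ultimately show "lower_density {n. (S ^^ n) x \<in> U} > 0"
    by simp
qed

lemma wshift_funpow:
  "(wshift w ^^ n) x k * (\<Prod>i\<in>{1..k}. w i) = (\<Prod>i\<in>{1..k + n}. w i) * x (k + n)"
proof (induction n arbitrary: x)
  case 0
  then show ?case
    by (simp add: mult.commute)
next
  case (Suc n)
  have "(wshift w ^^ Suc n) x k * (\<Prod>i\<in>{1..k}. w i) =
        (wshift w ^^ n) (wshift w x) k * (\<Prod>i\<in>{1..k}. w i)"
    by (simp add: funpow_Suc_right del: funpow.simps)
  also have "\<dots> = (\<Prod>i\<in>{1..k + n}. w i) * (w (Suc (k + n)) * x (Suc (k + n)))"
    unfolding Suc.IH by (simp add: wshift_def)
  also have "\<dots> = (\<Prod>i\<in>{1..k + Suc n}. w i) * x (k + Suc n)"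
    by (simp add: atLeastAtMostSuc_conv mult.assoc)
  finally show ?case .
qed

lemma wshift_funpow_ratio:
  fixes u v :: "nat \<Rightarrow> 'a::real_normed_field"
  assumes u: "\<forall>n\<ge>1. u n \<noteq> 0" and v: "\<forall>n\<ge>1. v n \<noteq> 0"
  shows "(wshift v ^^ n) x k =
    (\<Prod>i\<in>{1..k}. u i) / (\<Prod>i\<in>{1..k}. v i) / ((\<Prod>i\<in>{1..k + n}. u i) / (\<Prod>i\<in>{1..k + n}. v i)) *
    (wshift u ^^ n) x k"
proof -
  have u_prod: "(\<Prod>i\<in>{1..m}. u i) \<noteq> 0" and v_prod: "(\<Prod>i\<in>{1..m}. v i) \<noteq> 0" for m
    using u v by auto
  have funpow_eq: "(wshift w ^^ n) x k = (\<Prod>i\<in>{1..k + n}. w i) * x (k + n) / (\<Prod>i\<in>{1..k}. w i)"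
    if "(\<Prod>i\<in>{1..k}. w i) \<noteq> 0" for w :: "nat \<Rightarrow> 'a"
    using that by (metis nonzero_mult_div_cancel_right wshift_funpow)
  show ?thesis
    unfolding funpow_eq[OF u_prod] funpow_eq[OF v_prod]
    using u_prod[of k] v_prod[of k] u_prod[of "k + n"] v_prod[of "k + n"]
    by (simp add: field_simps del: prod_zero_iff)
qed

lemma fhc_vector_wshift_transfer:
  fixes u v :: "nat \<Rightarrow> 'a::real_normed_field"
  assumes p: "p > 0" and u: "\<forall>n\<ge>1. u n \<noteq> 0" and v: "\<forall>n\<ge>1. v n \<noteq> 0"
    and lim: "(\<lambda>n. (\<Prod>i\<in>{1..n}. u i) / (\<Prod>i\<in>{1..n}. v i)) \<longlonglongrightarrow> L" and L: "L \<noteq> 0"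
    and x: "fhc_vector p (wshift u) x"
  shows "fhc_vector p (wshift v) x"
proof (rule fhc_vector_diagonal_ratio_transfer[OF p _ lim L _ x])
  show "(\<Prod>i\<in>{1..k}. u i) / (\<Prod>i\<in>{1..k}. v i) \<noteq> 0" for k
    using u v by auto
qed (rule wshift_funpow_ratio[OF u v])

theorem proposition6p9:
  fixes p :: real and u v :: "nat \<Rightarrow> 'a::{real_normed_field, banach}" and L :: 'a
  assumes "1 \<le> p"
    and "bounded (range u)" and "bounded (range v)"
    and "\<forall>n\<ge>1. u n \<noteq> 0" and "\<forall>n\<ge>1. v n \<noteq> 0"
    and "fhc p (wshift u)" and "fhc p (wshift v)"
    and "(\<lambda>n. (\<Prod>i\<in>{1..n}. u i) / (\<Prod>i\<in>{1..n}. v i)) \<longlonglongrightarrow> L"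
    and "L \<noteq> 0"
  shows "{x. fhc_vector p (wshift u) x} = {x. fhc_vector p (wshift v) x}"
proof -
  have p: "p > 0"
    using assms(1) by simp
  have "(\<lambda>n. (\<Prod>i\<in>{1..n}. v i) / (\<Prod>i\<in>{1..n}. u i)) \<longlonglongrightarrow> inverse L"
    using tendsto_inverse[OF assms(8,9)] by (simp add: inverse_divide)
  moreover have "inverse L \<noteq> 0"
    using assms(9) by simp
  ultimately show ?thesis
    using fhc_vector_wshift_transfer[OF p assms(4,5,8,9)] fhc_vector_wshift_transfer[OF p assms(5,4)]
    by blast
qed

end
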